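(* Let $M$ be a matroid on $[n]$ and $\preceq$ a term order on $\mathbb{R}[x_1,\dots,x_n]$. Then $\mathcal{S}_\preceq(M)=\mathcal{S}_\preceq(M^* )$, where $M^*$ is the dual matroid.
   Context: The basis configuration of $M$ is $V_M=\{\mathbf{e}_B:B \text{ a basis of } M\}\subseteq\{0,1\}^n$ ($\mathbf{e}_B$ the characteristic vector of $B$). $\mathcal{S}_\preceq(M)=\{\tau\subseteq[n]:\prod_{i\in\tau}x_i\notin\mathrm{in}_\preceq(I(V_M))\}$, where $I(V_M)$ is the vanishing ideal of $V_M$ and $\mathrm{in}_\preceq$ denotes the initial ideal. $M^*$ has bases $\{[n]\setminus B: B \text{ a basis of } M\}$. *)

theory Defs
  imports Complex_Main "HOL-Library.Poly_Mapping"
begin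

definition matroid_bases :: "nat \<Rightarrow> nat set set \<Rightarrow> bool" where
  "matroid_bases n \<B> \<longleftrightarrow>
     \<B> \<noteq> {} \<and> (\<forall>B\<in>\<B>. B \<subseteq> {1..n}) \<and>
     (\<forall>B1\<in>\<B>. \<forall>B2\<in>\<B>. \<forall>x\<in>B1 - B2. \<exists>y\<in>B2 - B1. insert y (B1 - {x}) \<in> \<B>)"

definition dual_bases :: "nat \<Rightarrow> nat set set \<Rightarrow> nat set set" where
  "dual_bases n \<B> = (\<lambda>B. {1..n} - B) ` \<B>"

text \<open>Monomials in x_1..x_n are exponent vectors finitely supported nat-to-nat maps with support in {1..n};
  polynomials in R[x_1..x_n] are finitely supported maps from monomials to reals.\<close>
type_synonym mono = "nat \<Rightarrow>\<^sub>0 nat"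
type_synonym mpoly = "mono \<Rightarrow>\<^sub>0 real"

definition mons_in :: "nat \<Rightarrow> mono set" where
  "mons_in n = {m. Poly_Mapping.keys m \<subseteq> {1..n}}"

definition polys :: "nat \<Rightarrow> mpoly set" where
  "polys n = {f. Poly_Mapping.keys f \<subseteq> mons_in n}"

definition term_order :: "nat \<Rightarrow> (mono \<Rightarrow> mono \<Rightarrow> bool) \<Rightarrow> bool" where
  "term_order n ord \<longleftrightarrow>
     (\<forall>a\<in>mons_in n. ord a a) \<and>
     (\<forall>a\<in>mons_in n. \<forall>b\<in>mons_in n. ord a b \<and> ord b a \<longrightarrow> a = b) \<and>
     (\<forall>a\<in>mons_in n. \<forall>b\<in>mons_in n. \<forall>c\<in>mons_in n. ord a b \<and> ord b c \<longrightarrow> ord a c) \<and>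
     (\<forall>a\<in>mons_in n. \<forall>b\<in>mons_in n. ord a b \<or> ord b a) \<and>
     (\<forall>a\<in>mons_in n. ord 0 a) \<and>
     (\<forall>a\<in>mons_in n. \<forall>b\<in>mons_in n. \<forall>c\<in>mons_in n. ord a b \<longrightarrow> ord (a + c) (b + c))"

definition lead_mono :: "(mono \<Rightarrow> mono \<Rightarrow> bool) \<Rightarrow> mpoly \<Rightarrow> mono" where
  "lead_mono ord f = (THE m. m \<in> Poly_Mapping.keys f \<and> (\<forall>m'\<in>Poly_Mapping.keys f. ord m' m))"

definition eval_mono :: "mono \<Rightarrow> (nat \<Rightarrow> real) \<Rightarrow> real" where
  "eval_mono m v = (\<Prod>i\<in>Poly_Mapping.keys m. v i ^ Poly_Mapping.lookup m i)"

definition eval_poly :: "mpoly \<Rightarrow> (nat \<Rightarrow> real) \<Rightarrow> real" where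
  "eval_poly f v = (\<Sum>m\<in>Poly_Mapping.keys f. Poly_Mapping.lookup f m * eval_mono m v)"

definition char_vec :: "nat set \<Rightarrow> nat \<Rightarrow> real" where
  "char_vec B i = (if i \<in> B then 1 else 0)"

definition basis_config :: "nat set set \<Rightarrow> (nat \<Rightarrow> real) set" where
  "basis_config \<B> = char_vec ` \<B>"

definition vanishing_ideal :: "nat \<Rightarrow> (nat \<Rightarrow> real) set \<Rightarrow> mpoly set" where
  "vanishing_ideal n V = {f \<in> polys n. \<forall>v\<in>V. eval_poly f v = 0}"

definition gen_ideal :: "nat \<Rightarrow> mpoly set \<Rightarrow> mpoly set" where
  "gen_ideal n G = {(\<Sum>h\<in>H. c h * h) | c H. finite H \<and> H \<subseteq> G \<and> (\<forall>h\<in>H. c h \<in> polys n)}"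

definition initial_ideal :: "nat \<Rightarrow> (mono \<Rightarrow> mono \<Rightarrow> bool) \<Rightarrow> mpoly set \<Rightarrow> mpoly set" where
  "initial_ideal n ord I =
     gen_ideal n {Poly_Mapping.single (lead_mono ord f) (Poly_Mapping.lookup f (lead_mono ord f)) | f. f \<in> I \<and> f \<noteq> 0}"

definition sqfree_mono :: "nat set \<Rightarrow> mpoly" where
  "sqfree_mono \<tau> = Poly_Mapping.single (\<Sum>i\<in>\<tau>. Poly_Mapping.single i 1) 1"

definition S_complex :: "nat \<Rightarrow> (mono \<Rightarrow> mono \<Rightarrow> bool) \<Rightarrow> nat set set \<Rightarrow> nat set set" where
  "S_complex n ord \<B> =
     {\<tau>. \<tau> \<subseteq> {1..n} \<and> sqfree_mono \<tau> \<notin> initial_ideal n ord (vanishing_ideal n (basis_config \<B>))}"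

end

theory Submission
  imports Defs
begin

(* Since char_vec ([n] - B) = 1 - char_vec B on [n], the substitution x_i \<mapsto> 1 - x_i carries
  polynomials vanishing on V_M to polynomials vanishing on V_{M^*}.  On 0/1 points a monomial m
  agrees with x^S, S its support, so f(1 - x) agrees there with the polynomial obtained from f by
  replacing each monomial m by (-1)^|S| m plus a combination of the squarefree proper divisors x^T,
  T \<subset> S, of m.  Divisors are smaller in every term order, so this keeps the leading monomial of f,
  and after fixing a global sign also its leading coefficient.  Hence both vanishing ideals have
  the same leading terms, and so the same initial ideal. *)

lemma eval_poly_eq_sum_superset:
  assumes "finite K" "Poly_Mapping.keys f \<subseteq> K"
  shows "eval_poly f v = (\<Sum>m\<in>K. Poly_Mapping.lookup f m * eval_mono m v)"
  unfolding eval_poly_def using assms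
  by (intro sum.mono_neutral_left) (auto simp: in_keys_iff)

lemma eval_poly_add: "eval_poly (p + q) v = eval_poly p v + eval_poly q v"
proof -
  let ?K = "Poly_Mapping.keys p \<union> Poly_Mapping.keys q"
  have "eval_poly (p + q) v = (\<Sum>m\<in>?K. Poly_Mapping.lookup (p + q) m * eval_mono m v)"
    using keys_add[of p q] by (intro eval_poly_eq_sum_superset) auto
  also have "\<dots> = (\<Sum>m\<in>?K. Poly_Mapping.lookup p m * eval_mono m v)
      + (\<Sum>m\<in>?K. Poly_Mapping.lookup q m * eval_mono m v)"
    by (simp add: lookup_add distrib_right sum.distrib)
  also have "\<dots> = eval_poly p v + eval_poly q v"
    by (subst (1 2) eval_poly_eq_sum_superset[of ?K]) auto
  finally show ?thesis .
qed

lemma eval_poly_sum: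
  "finite A \<Longrightarrow> eval_poly (\<Sum>a\<in>A. p a) v = (\<Sum>a\<in>A. eval_poly (p a) v)"
  by (induction A rule: finite_induct) (simp add: eval_poly_def, simp add: eval_poly_add)

lemma eval_poly_single: "eval_poly (Poly_Mapping.single m c) v = c * eval_mono m v"
  by (cases "c = 0") (auto simp: eval_poly_def)

lemma eval_mono_char_vec:
  "eval_mono m (char_vec X) = (\<Prod>i\<in>Poly_Mapping.keys m. char_vec X i)"
  unfolding eval_mono_def by (rule prod.cong) (auto simp: char_vec_def in_keys_iff)

definition mono_of_set :: "nat set \<Rightarrow> mono" where
  "mono_of_set T = (\<Sum>i\<in>T. Poly_Mapping.single i 1)"

lemma lookup_mono_of_set:
  "finite T \<Longrightarrow> Poly_Mapping.lookup (mono_of_set T) i = (if i \<in> T then 1 else 0)"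
  unfolding mono_of_set_def by (simp add: lookup_sum lookup_single when_def)

lemma keys_mono_of_set: "finite T \<Longrightarrow> Poly_Mapping.keys (mono_of_set T) = T"
  by (auto simp: in_keys_iff lookup_mono_of_set split: if_splits)

lemma keys_mono_of_set_subset:
  "T \<subseteq> Poly_Mapping.keys m \<Longrightarrow> Poly_Mapping.keys (mono_of_set T) = T"
  by (meson finite_keys finite_subset keys_mono_of_set)

lemma mono_of_set_in_mons_in:
  "m \<in> mons_in n \<Longrightarrow> T \<subseteq> Poly_Mapping.keys m \<Longrightarrow> mono_of_set T \<in> mons_in n"
  by (auto simp: mons_in_def keys_mono_of_set_subset)

text \<open>On 0/1 points \<open>flip_mono m c\<close> agrees with \<open>c \<cdot> m(1 - x)\<close>: it is the expansion of
  \<open>c \<cdot> (\<Prod>i\<in>S. 1 - x i)\<close>, \<open>S\<close> the support of \<open>m\<close>, with its top term \<open>x\<^sup>S\<close> replaced by \<open>m\<close>.\<close>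

definition flip_mono :: "mono \<Rightarrow> real \<Rightarrow> mpoly" where
  "flip_mono m c = (\<Sum>T\<in>Pow (Poly_Mapping.keys m).
     Poly_Mapping.single (if T = Poly_Mapping.keys m then m else mono_of_set T) (c * (-1) ^ card T))"

lemma keys_flip_mono:
  "Poly_Mapping.keys (flip_mono m c) \<subseteq> insert m (mono_of_set ` Pow (Poly_Mapping.keys m))"
  unfolding flip_mono_def by (rule order.trans[OF keys_sum]) (auto split: if_splits)

lemma lookup_flip_mono_self:
  "Poly_Mapping.lookup (flip_mono m c) m = c * (-1) ^ card (Poly_Mapping.keys m)"
proof -
  let ?S = "Poly_Mapping.keys m"
  have "mono_of_set T \<noteq> m" if "T \<in> Pow ?S - {?S}" for T
    using that keys_mono_of_set_subset[of T m] by force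
  then show ?thesis
    unfolding flip_mono_def lookup_sum
    by (subst sum.remove[of _ ?S]) (auto simp: lookup_single when_def)
qed

lemma eval_flip_mono:
  assumes "Poly_Mapping.keys m \<subseteq> {1..n}"
  shows "eval_poly (flip_mono m c) (char_vec ({1..n} - B)) = c * eval_mono m (char_vec B)"
proof -
  define S where "S = Poly_Mapping.keys m"
  define w where "w = char_vec ({1..n} - B)"
  have eval_term: "eval_mono (if T = S then m else mono_of_set T) w = (\<Prod>i\<in>T. w i)"
    if "T \<subseteq> S" for T
    using that by (auto simp: S_def w_def eval_mono_char_vec keys_mono_of_set_subset)
  have "finite (Pow S)" by (simp add: S_def)
  then have "eval_poly (flip_mono m c) w = (\<Sum>T\<in>Pow S. c * ((-1) ^ card T * (\<Prod>i\<in>T. w i)))"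
    unfolding flip_mono_def S_def[symmetric]
    by (auto simp: eval_poly_sum eval_poly_single eval_term intro!: sum.cong)
  also have "\<dots> = c * (\<Prod>i\<in>S. 1 - w i)"
    using prod_diff_conv_sum[of S "\<lambda>_. 1" w] by (simp add: S_def sum_distrib_left)
  also have "(\<Prod>i\<in>S. 1 - w i) = (\<Prod>i\<in>S. char_vec B i)"
    by (rule prod.cong) (use assms in \<open>auto simp: S_def w_def char_vec_def\<close>)
  finally show ?thesis by (simp add: S_def w_def eval_mono_char_vec)
qed

definition flip_poly :: "real \<Rightarrow> mpoly \<Rightarrow> mpoly" where
  "flip_poly c f = (\<Sum>m\<in>Poly_Mapping.keys f. flip_mono m (c * Poly_Mapping.lookup f m))"

lemma keys_flip_poly:
  "Poly_Mapping.keys (flip_poly c f)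
     \<subseteq> (\<Union>m\<in>Poly_Mapping.keys f. insert m (mono_of_set ` Pow (Poly_Mapping.keys m)))"
  unfolding flip_poly_def by (rule order.trans[OF keys_sum UN_mono[OF order.refl keys_flip_mono]])

lemma flip_poly_in_polys:
  assumes "f \<in> polys n"
  shows "flip_poly c f \<in> polys n"
proof -
  have "insert m (mono_of_set ` Pow (Poly_Mapping.keys m)) \<subseteq> mons_in n"
    if "m \<in> Poly_Mapping.keys f" for m
    using that assms mono_of_set_in_mons_in by (auto simp: polys_def)
  then show ?thesis
    using keys_flip_poly[of c f] unfolding polys_def by blast
qed

lemma eval_flip_poly:
  assumes "f \<in> polys n"
  shows "eval_poly (flip_poly c f) (char_vec ({1..n} - B)) = c * eval_poly f (char_vec B)"
proof -
  have "eval_poly (flip_poly c f) (char_vec ({1..n} - B))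
      = (\<Sum>m\<in>Poly_Mapping.keys f. c * (Poly_Mapping.lookup f m * eval_mono m (char_vec B)))"
    unfolding flip_poly_def eval_poly_sum[OF finite_keys]
  proof (rule sum.cong)
    fix m assume "m \<in> Poly_Mapping.keys f"
    then have "Poly_Mapping.keys m \<subseteq> {1..n}"
      using assms by (auto simp: polys_def mons_in_def)
    then show "eval_poly (flip_mono m (c * Poly_Mapping.lookup f m)) (char_vec ({1..n} - B))
        = c * (Poly_Mapping.lookup f m * eval_mono m (char_vec B))"
      by (simp only: eval_flip_mono mult.assoc)
  qed simp
  then show ?thesis
    by (simp add: eval_poly_def sum_distrib_left)
qed

lemma flip_poly_in_vanishing_ideal_dual:
  assumes f: "f \<in> vanishing_ideal n (basis_config \<B>)"
  shows "flip_poly c f \<in> vanishing_ideal n (basis_config (dual_bases n \<B>))"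
  unfolding vanishing_ideal_def
proof (intro CollectI conjI ballI)
  have "f \<in> polys n" using f by (simp add: vanishing_ideal_def)
  then show "flip_poly c f \<in> polys n" by (rule flip_poly_in_polys)
  fix v assume "v \<in> basis_config (dual_bases n \<B>)"
  then obtain B where "B \<in> \<B>" and v: "v = char_vec ({1..n} - B)"
    by (auto simp: basis_config_def dual_bases_def)
  then have "eval_poly f (char_vec B) = 0"
    using f by (simp add: vanishing_ideal_def basis_config_def)
  then show "eval_poly (flip_poly c f) v = 0"
    unfolding v eval_flip_poly[OF \<open>f \<in> polys n\<close>] by simp
qed

definition lead_term :: "(mono \<Rightarrow> mono \<Rightarrow> bool) \<Rightarrow> mpoly \<Rightarrow> mpoly" where
  "lead_term ord f = Poly_Mapping.single (lead_mono ord f) (Poly_Mapping.lookup f (lead_mono ord f))"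

definition lead_terms :: "(mono \<Rightarrow> mono \<Rightarrow> bool) \<Rightarrow> mpoly set \<Rightarrow> mpoly set" where
  "lead_terms ord I = lead_term ord ` {f \<in> I. f \<noteq> 0}"

lemma initial_ideal_eq_gen_ideal_lead_terms:
  "initial_ideal n ord I = gen_ideal n (lead_terms ord I)"
  unfolding initial_ideal_def lead_terms_def lead_term_def
  by (rule arg_cong[where f = "gen_ideal n"]) blast

context
  fixes n :: nat and ord :: "mono \<Rightarrow> mono \<Rightarrow> bool"
  assumes term_order: "term_order n ord"
begin

lemma term_order_refl: "a \<in> mons_in n \<Longrightarrow> ord a a"
  using term_order unfolding term_order_def by blast

lemma term_order_antisym:
  "a \<in> mons_in n \<Longrightarrow> b \<in> mons_in n \<Longrightarrow> ord a b \<Longrightarrow> ord b a \<Longrightarrow> a = b"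
  using term_order unfolding term_order_def by blast

lemma term_order_trans:
  "a \<in> mons_in n \<Longrightarrow> b \<in> mons_in n \<Longrightarrow> c \<in> mons_in n \<Longrightarrow> ord a b \<Longrightarrow> ord b c \<Longrightarrow> ord a c"
  using term_order unfolding term_order_def by blast

lemma term_order_total: "a \<in> mons_in n \<Longrightarrow> b \<in> mons_in n \<Longrightarrow> ord a b \<or> ord b a"
  using term_order unfolding term_order_def by blast

lemma term_order_zero_le: "a \<in> mons_in n \<Longrightarrow> ord 0 a"
  using term_order unfolding term_order_def by blast

lemma term_order_add_right:
  "a \<in> mons_in n \<Longrightarrow> b \<in> mons_in n \<Longrightarrow> c \<in> mons_in n \<Longrightarrow> ord a b \<Longrightarrow> ord (a + c) (b + c)"
  using term_order unfolding term_order_def by blast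

lemma term_order_le_if_divides:
  assumes "a \<in> mons_in n" "d \<in> mons_in n"
    and "\<And>i. Poly_Mapping.lookup a i \<le> Poly_Mapping.lookup d i"
  shows "ord a d"
proof -
  have d_eq: "d = (d - a) + a"
    by (rule poly_mapping_eqI) (use assms(3) in \<open>simp add: lookup_add lookup_minus\<close>)
  have "d - a \<in> mons_in n"
    using assms(2) by (auto simp: mons_in_def in_keys_iff lookup_minus)
  moreover have "0 \<in> mons_in n" by (simp add: mons_in_def)
  ultimately have "ord (0 + a) ((d - a) + a)"
    using term_order_add_right term_order_zero_le assms(1) by blast
  then show ?thesis using d_eq by simp
qed

lemma mono_of_set_le:
  assumes "m \<in> mons_in n" "T \<subseteq> Poly_Mapping.keys m"
  shows "ord (mono_of_set T) m"
proof (rule term_order_le_if_divides[OF mono_of_set_in_mons_in[OF assms] assms(1)])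
  have "finite T" using assms(2) by (rule finite_subset) simp
  then show "Poly_Mapping.lookup (mono_of_set T) i \<le> Poly_Mapping.lookup m i" for i
    using assms(2) by (auto simp: lookup_mono_of_set in_keys_iff)
qed

lemma term_order_finite_has_greatest:
  assumes "finite K" "K \<noteq> {}" "K \<subseteq> mons_in n"
  shows "\<exists>L\<in>K. \<forall>m\<in>K. ord m L"
  using assms
proof (induction K rule: finite_ne_induct)
  case (singleton x)
  then show ?case using term_order_refl by auto
next
  case (insert x F)
  then obtain L where L: "L \<in> F" "\<forall>m\<in>F. ord m L" by auto
  have "x \<in> mons_in n" "L \<in> mons_in n" "F \<subseteq> mons_in n" using insert.prems L by auto
  then consider "ord x L" | "ord L x" using term_order_total by blast
  then show ?case
  proof cases
    case 1
    then show ?thesis using L by auto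
  next
    case 2
    have "ord m x" if "m \<in> F" for m
      using that L(2) 2 \<open>F \<subseteq> mons_in n\<close> term_order_trans[of m L x] \<open>x \<in> mons_in n\<close> \<open>L \<in> mons_in n\<close>
      by auto
    then show ?thesis using term_order_refl \<open>x \<in> mons_in n\<close> by auto
  qed
qed

lemma lead_mono_eqI:
  assumes "Poly_Mapping.keys f \<subseteq> mons_in n"
    and "L \<in> Poly_Mapping.keys f" "\<And>m. m \<in> Poly_Mapping.keys f \<Longrightarrow> ord m L"
  shows "lead_mono ord f = L"
  unfolding lead_mono_def
proof (rule the_equality)
  fix L' assume L': "L' \<in> Poly_Mapping.keys f \<and> (\<forall>m\<in>Poly_Mapping.keys f. ord m L')"
  show "L' = L"
    by (rule term_order_antisym) (use L' assms in auto)
qed (use assms in auto)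

lemma lead_mono_greatest:
  assumes "f \<in> polys n" "f \<noteq> 0"
  shows "lead_mono ord f \<in> Poly_Mapping.keys f"
    and "\<And>m. m \<in> Poly_Mapping.keys f \<Longrightarrow> ord m (lead_mono ord f)"
proof -
  have keys: "Poly_Mapping.keys f \<subseteq> mons_in n" using assms(1) by (simp add: polys_def)
  obtain L where "L \<in> Poly_Mapping.keys f" "\<forall>m\<in>Poly_Mapping.keys f. ord m L"
    using term_order_finite_has_greatest[OF finite_keys _ keys] assms(2) by auto
  with lead_mono_eqI[OF keys] show "lead_mono ord f \<in> Poly_Mapping.keys f"
    and "\<And>m. m \<in> Poly_Mapping.keys f \<Longrightarrow> ord m (lead_mono ord f)"
    by auto
qed

lemma keys_flip_poly_le_lead_mono:
  assumes "f \<in> polys n" "f \<noteq> 0" "d \<in> Poly_Mapping.keys (flip_poly c f)"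
  shows "ord d (lead_mono ord f)"
proof -
  have keys: "Poly_Mapping.keys f \<subseteq> mons_in n" using assms(1) by (simp add: polys_def)
  obtain m where m: "m \<in> Poly_Mapping.keys f"
    "d \<in> insert m (mono_of_set ` Pow (Poly_Mapping.keys m))"
    using keys_flip_poly assms(3) by blast
  have "ord m (lead_mono ord f)" using lead_mono_greatest(2)[OF assms(1,2) m(1)] .
  moreover have "ord d m" "d \<in> mons_in n"
    using m keys mono_of_set_le mono_of_set_in_mons_in term_order_refl by auto
  ultimately show ?thesis
    using term_order_trans m(1) keys lead_mono_greatest(1)[OF assms(1,2)] by blast
qed

lemma lookup_flip_poly_lead_mono:
  assumes "f \<in> polys n" "f \<noteq> 0"
  defines "L \<equiv> lead_mono ord f"
  shows "Poly_Mapping.lookup (flip_poly c f) L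
    = c * Poly_Mapping.lookup f L * (-1) ^ card (Poly_Mapping.keys L)"
proof -
  have keys: "Poly_Mapping.keys f \<subseteq> mons_in n" using assms(1) by (simp add: polys_def)
  have L: "L \<in> Poly_Mapping.keys f" "\<And>m. m \<in> Poly_Mapping.keys f \<Longrightarrow> ord m L"
    unfolding L_def using lead_mono_greatest[OF assms(1,2)] by auto
  have "Poly_Mapping.lookup (flip_mono m a) L = 0" if m: "m \<in> Poly_Mapping.keys f - {L}" for m a
  proof (rule ccontr)
    assume "Poly_Mapping.lookup (flip_mono m a) L \<noteq> 0"
    then have "L \<in> insert m (mono_of_set ` Pow (Poly_Mapping.keys m))"
      using keys_flip_mono by (blast intro: in_keys_iff[THEN iffD2])
    then have "ord L m" using m keys mono_of_set_le term_order_refl by auto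
    then have "L = m" using L m keys term_order_antisym by blast
    with m show False by simp
  qed
  then show ?thesis
    unfolding flip_poly_def lookup_sum using L(1)
    by (subst sum.remove[of _ L]) (auto simp: lookup_flip_mono_self)
qed

lemma lead_term_flip_poly:
  assumes "f \<in> polys n" "f \<noteq> 0"
    and s: "s = (-1) ^ card (Poly_Mapping.keys (lead_mono ord f))"
  shows "flip_poly s f \<noteq> 0" "lead_term ord (flip_poly s f) = lead_term ord f"
proof -
  let ?L = "lead_mono ord f" and ?g = "flip_poly s f"
  have "s * s = 1" unfolding s by (simp flip: power_mult_distrib)
  then have lookup_L: "Poly_Mapping.lookup ?g ?L = Poly_Mapping.lookup f ?L"
    using lookup_flip_poly_lead_mono[OF assms(1,2), of s] by (simp add: s mult_ac)
  then have "?L \<in> Poly_Mapping.keys ?g"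
    using lead_mono_greatest(1)[OF assms(1,2)] by (simp add: in_keys_iff)
  then have "lead_mono ord ?g = ?L"
    using lead_mono_eqI keys_flip_poly_le_lead_mono[OF assms(1,2)] flip_poly_in_polys[OF assms(1)]
    by (simp add: polys_def)
  then show "lead_term ord ?g = lead_term ord f"
    using lookup_L by (simp add: lead_term_def)
  show "?g \<noteq> 0" using \<open>?L \<in> Poly_Mapping.keys ?g\<close> by auto
qed

lemma lead_terms_vanishing_ideal_subset_dual:
  "lead_terms ord (vanishing_ideal n (basis_config \<B>))
     \<subseteq> lead_terms ord (vanishing_ideal n (basis_config (dual_bases n \<B>)))"
proof
  fix t assume "t \<in> lead_terms ord (vanishing_ideal n (basis_config \<B>))"
  then obtain f where f: "f \<in> vanishing_ideal n (basis_config \<B>)" "f \<noteq> 0"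
    and t: "t = lead_term ord f"
    unfolding lead_terms_def by blast
  define s :: real where "s = (-1) ^ card (Poly_Mapping.keys (lead_mono ord f))"
  have "f \<in> polys n" using f(1) by (simp add: vanishing_ideal_def)
  then have "flip_poly s f \<noteq> 0" "t = lead_term ord (flip_poly s f)"
    using lead_term_flip_poly[OF _ f(2) s_def] t by auto
  moreover have "flip_poly s f \<in> vanishing_ideal n (basis_config (dual_bases n \<B>))"
    using flip_poly_in_vanishing_ideal_dual[OF f(1)] .
  ultimately show "t \<in> lead_terms ord (vanishing_ideal n (basis_config (dual_bases n \<B>)))"
    unfolding lead_terms_def by blast
qed

end

lemma dual_bases_dual_bases:
  "\<forall>B\<in>\<B>. B \<subseteq> {1..n} \<Longrightarrow> dual_bases n (dual_bases n \<B>) = \<B>"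
  unfolding dual_bases_def image_image by (simp add: double_diff cong: image_cong)

theorem proposition2p6:
  fixes n :: nat and \<B> :: "nat set set" and ord :: "mono \<Rightarrow> mono \<Rightarrow> bool"
  assumes "matroid_bases n \<B>" and "term_order n ord"
  shows "S_complex n ord \<B> = S_complex n ord (dual_bases n \<B>)"
proof -
  have "\<forall>B\<in>\<B>. B \<subseteq> {1..n}" using assms(1) by (simp add: matroid_bases_def)
  then have "dual_bases n (dual_bases n \<B>) = \<B>" by (rule dual_bases_dual_bases)
  then have "lead_terms ord (vanishing_ideal n (basis_config \<B>))
      = lead_terms ord (vanishing_ideal n (basis_config (dual_bases n \<B>)))"
    using lead_terms_vanishing_ideal_subset_dual[OF assms(2), of \<B>]
      lead_terms_vanishing_ideal_subset_dual[OF assms(2), of "dual_bases n \<B>"]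
    by auto
  then show ?thesis
    by (simp add: S_complex_def initial_ideal_eq_gen_ideal_lead_terms)
qed

end
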